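(* Let $(X,d)$ be a metric space, $\mu$ a non-atomic Borel measure on $X$, $\beta>0$, and let $\Gamma^*\subset\Gamma^\mu$ be a family of paths closed under taking non-trivial subpaths that has the $\mu$-arc-chord property with exponent $\beta$. Let $f:X\to\mathbb R$ be continuous and $g:X\to[0,\infty]$ measurable with $|f(x)-f(y)|\le d(x,y)^\beta(g(x)+g(y))$ for all $x,y\in X$. Then there is $C>0$ such that $Cg$ is an upper gradient of $f$.
   Context: A path is a continuous map $\gamma:[a,b]\to X$; a subpath is a restriction to a subinterval, trivial if that interval is a point; $\mathrm{Im}(\gamma)=\gamma([a,b])$. $\mu$ non-atomic: $\mu(\{x\})=0$ for all $x$. $\Gamma^\mu$ is the set of all non-trivial injective paths $\gamma$ with $0<\mu(\mathrm{Im}(\tilde\gamma))<\infty$ for every non-trivial subpath $\tilde\gamma$. For Borel $g\ge0$, $\int_\gamma g:=\int_{\mathrm{Im}(\gamma)}g\,d\mu$. $\mu$-arc-chord property with exponent $\beta$: there is $C_\mu>0$ with $\mathrm{diam}(\mathrm{Im}(\gamma))^\beta\le C_\mu\,\mu(\mathrm{Im}(\gamma))$ for all $\gamma\in\Gamma^*$. A nonnegative function $\rho$ is an upper gradient of $f$ if $|f(x)-f(y)|\le\int_\gamma\rho$ for every $\gamma\in\Gamma^*$ with endpoints $x,y$. *)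

theory Defs
  imports "HOL-Analysis.Analysis"
begin

text \<open>A path is represented as a triple (a, b, gamma) with a \<le> b and gamma continuous on [a,b];
  only the values of gamma on [a,b] matter.\<close>

type_synonym 'a rpath = "real \<times> real \<times> (real \<Rightarrow> 'a)"

definition path_img :: "'a rpath \<Rightarrow> 'a set" where
  "path_img p = (case p of (a, b, \<gamma>) \<Rightarrow> \<gamma> ` {a..b})"

definition path_start :: "'a rpath \<Rightarrow> 'a" where
  "path_start p = (case p of (a, b, \<gamma>) \<Rightarrow> \<gamma> a)"

definition path_end :: "'a rpath \<Rightarrow> 'a" where
  "path_end p = (case p of (a, b, \<gamma>) \<Rightarrow> \<gamma> b)"

definition Gamma_mu :: "'a::topological_space measure \<Rightarrow> 'a rpath set" where
  "Gamma_mu M = {(a, b, \<gamma>). a < b \<and> continuous_on {a..b} \<gamma> \<and> inj_on \<gamma> {a..b} \<and>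
     (\<forall>c d. a \<le> c \<and> c < d \<and> d \<le> b \<longrightarrow>
        0 < emeasure M (\<gamma> ` {c..d}) \<and> emeasure M (\<gamma> ` {c..d}) < \<infinity>)}"

definition closed_under_subpaths :: "'a rpath set \<Rightarrow> bool" where
  "closed_under_subpaths \<Gamma> \<longleftrightarrow>
     (\<forall>a b \<gamma> c d. (a, b, \<gamma>) \<in> \<Gamma> \<and> a \<le> c \<and> c < d \<and> d \<le> b \<longrightarrow> (c, d, \<gamma>) \<in> \<Gamma>)"

definition arc_chord :: "'a::metric_space measure \<Rightarrow> real \<Rightarrow> 'a rpath set \<Rightarrow> bool" where
  "arc_chord M \<beta> \<Gamma> \<longleftrightarrow> (\<exists>C>0. \<forall>p\<in>\<Gamma>.
     ennreal (diameter (path_img p) powr \<beta>) \<le> ennreal C * emeasure M (path_img p))"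

definition path_int :: "'a measure \<Rightarrow> 'a rpath \<Rightarrow> ('a \<Rightarrow> ennreal) \<Rightarrow> ennreal" where
  "path_int M p g = set_nn_integral M (path_img p) g"

definition upper_gradient ::
  "'a measure \<Rightarrow> 'a rpath set \<Rightarrow> ('a \<Rightarrow> real) \<Rightarrow> ('a \<Rightarrow> ennreal) \<Rightarrow> bool" where
  "upper_gradient M \<Gamma> f \<rho> \<longleftrightarrow>
     (\<forall>p\<in>\<Gamma>. ennreal \<bar>f (path_start p) - f (path_end p)\<bar> \<le> path_int M p \<rho>)"

end

theory Submission
  imports Defs
begin

text \<open>Reparametrise an arc \<gamma> on [a,b] by \<Phi>(t) = \<mu>(\<gamma>[a,t)), which is continuous and strictly
  increasing because \<mu> has no atoms and every subarc has positive measure. Cut the arc into n+1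
  pieces of equal measure m and pick in the i-th piece a point s_i at which g is at most its
  average over the piece. Consecutive points lie on a subarc of measure at most 2m, so the
  Hoelder-type hypothesis and the arc-chord property bound |f(\<gamma> s_i) - f(\<gamma> s_(i+1))| by
  2C times the integrals of g over pieces i and i+1; summing, |f(\<gamma> s_0) - f(\<gamma> s_n)| is at most
  4C times the integral of g over the arc. As n grows, s_0 and s_n tend to the endpoints of the
  arc, and continuity of f finishes the proof.\<close>

lemma exists_mult_emeasure_le_set_nn_integral:
  fixes g :: "'a \<Rightarrow> ennreal"
  assumes S: "S \<in> sets M" and pos: "0 < emeasure M S" and fin: "emeasure M S < \<infinity>"
    and g: "g \<in> borel_measurable M"
  shows "\<exists>x\<in>S. g x * emeasure M S \<le> set_nn_integral M S g"
proof (rule ccontr)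
  define J where "J = set_nn_integral M S g"
  define m where "m = emeasure M S"
  assume "\<not> ?thesis"
  then have less: "J < g x * m" if "x \<in> S" for x using that by (auto simp: J_def m_def not_le)
  obtain x0 where "x0 \<in> S" using pos by fastforce
  then have "J \<noteq> \<infinity>" using less[of x0] by (auto simp: top_unique)
  have lhs: "(\<integral>\<^sup>+x. J * indicator S x \<partial>M) = J * m"
    using S by (simp add: nn_integral_cmult_indicator m_def)
  have rhs: "(\<integral>\<^sup>+x. m * (g x * indicator S x) \<partial>M) = m * J"
    using S g by (simp add: nn_integral_cmult J_def)
  have "(\<integral>\<^sup>+x. J * indicator S x \<partial>M) \<noteq> \<infinity>"
    using \<open>J \<noteq> \<infinity>\<close> fin by (simp add: lhs ennreal_mult_eq_top_iff m_def)
  moreover have "AE x in M. J * indicator S x \<le> m * (g x * indicator S x)"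
    using less by (auto intro: less_imp_le simp: mult.commute split: split_indicator)
  moreover have "\<not> (AE x in M. m * (g x * indicator S x) \<le> J * indicator S x)"
  proof
    assume "AE x in M. m * (g x * indicator S x) \<le> J * indicator S x"
    then have "AE x in M. x \<notin> S"
      by eventually_elim (use less in \<open>auto simp: mult.commute not_le[symmetric]\<close>)
    then show False using pos S by (simp add: AE_iff_null_sets[symmetric] null_sets_def)
  qed
  ultimately have "(\<integral>\<^sup>+x. J * indicator S x \<partial>M) < (\<integral>\<^sup>+x. m * (g x * indicator S x) \<partial>M)"
    using S g by (intro nn_integral_less) auto
  then show False by (simp add: lhs rhs mult.commute)
qed

lemma sum_set_nn_integral_le_disjoint:
  fixes g :: "'a \<Rightarrow> ennreal"
  assumes "finite I" "disjoint_family_on Q I" "\<And>i. i \<in> I \<Longrightarrow> Q i \<in> sets M"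
    and "\<And>i. i \<in> I \<Longrightarrow> Q i \<subseteq> S" and g: "g \<in> borel_measurable M"
  shows "(\<Sum>i\<in>I. set_nn_integral M (Q i) g) \<le> set_nn_integral M S g"
proof -
  have "(\<Sum>i\<in>I. set_nn_integral M (Q i) g) = (\<integral>\<^sup>+x. g x * (\<Sum>i\<in>I. indicator (Q i) x) \<partial>M)"
    using assms by (simp add: nn_integral_sum[symmetric] sum_distrib_left)
  also have "\<dots> = set_nn_integral M (\<Union>(Q ` I)) g"
    using assms by (simp add: indicator_UN_disjoint)
  also have "\<dots> \<le> set_nn_integral M S g"
    using assms by (intro nn_set_integral_set_mono) auto
  finally show ?thesis .
qed

lemma telescoping_adjacent_estimate:
  fixes F :: "nat \<Rightarrow> real" and J :: "nat \<Rightarrow> ennreal"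
  assumes step: "\<And>i. i < n \<Longrightarrow> ennreal \<bar>F i - F (Suc i)\<bar> \<le> c * (J i + J (Suc i))"
  shows "ennreal \<bar>F 0 - F n\<bar> \<le> c * (2 * (\<Sum>i<Suc n. J i))"
proof -
  have "\<bar>F 0 - F n\<bar> \<le> (\<Sum>i<n. \<bar>F i - F (Suc i)\<bar>)"
    unfolding sum_lessThan_telescope'[symmetric] by (rule sum_abs)
  then have "ennreal \<bar>F 0 - F n\<bar> \<le> (\<Sum>i<n. ennreal \<bar>F i - F (Suc i)\<bar>)"
    by (simp add: ennreal_leI)
  also have "\<dots> \<le> c * ((\<Sum>i<n. J i) + (\<Sum>i<n. J (Suc i)))"
    unfolding sum.distrib[symmetric] sum_distrib_left by (intro sum_mono step) simp
  also have "\<dots> \<le> c * ((\<Sum>i<Suc n. J i) + (\<Sum>i<Suc n. J i))"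
  proof -
    have "(\<Sum>i<n. J (Suc i)) \<le> (\<Sum>i<Suc n. J i)"
      unfolding sum.lessThan_Suc_shift by (intro add_increasing) auto
    then show ?thesis by (intro mult_left_mono add_mono sum_mono2) auto
  qed
  finally show ?thesis unfolding mult_2 .
qed

locale measured_arc =
  fixes M :: "'a::t2_space measure" and a b :: real and \<gamma> :: "real \<Rightarrow> 'a"
  assumes sets_M: "sets M = sets borel"
    and emeasure_singleton: "\<And>x. emeasure M {x} = 0"
    and a_less_b: "a < b"
    and continuous_arc: "continuous_on {a..b} \<gamma>"
    and inj_arc: "inj_on \<gamma> {a..b}"
    and emeasure_arc_finite: "emeasure M (\<gamma> ` {a..b}) < \<infinity>"
    and emeasure_subarc_pos: "\<And>u v. a \<le> u \<Longrightarrow> u < v \<Longrightarrow> v \<le> b \<Longrightarrow> 0 < emeasure M (\<gamma> ` {u..v})"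
begin

lemma sets_image_Icc: "a \<le> u \<Longrightarrow> v \<le> b \<Longrightarrow> \<gamma> ` {u..v} \<in> sets M"
  unfolding sets_M
  by (intro borel_closed compact_imp_closed compact_continuous_image
        continuous_on_subset[OF continuous_arc]) auto

lemma null_sets_singleton: "{x} \<in> null_sets M"
  using emeasure_singleton[of x] by (simp add: null_sets_def sets_M)

lemma image_Ico:
  assumes "a \<le> u" "u \<le> v" "v \<le> b"
  shows "\<gamma> ` {u..<v} = \<gamma> ` {u..v} - {\<gamma> v}"
proof -
  have "\<gamma> ` ({u..v} - {v}) = \<gamma> ` {u..v} - \<gamma> ` {v}"
    using assms by (intro inj_on_image_set_diff[OF inj_arc]) auto
  then show ?thesis by (simp add: atLeastLessThan_eq_atLeastAtMost_diff)
qed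

lemma emeasure_image_Ico:
  assumes "a \<le> u" "u \<le> v" "v \<le> b"
  shows "emeasure M (\<gamma> ` {u..<v}) = emeasure M (\<gamma> ` {u..v})"
  using assms by (simp add: image_Ico emeasure_Diff_null_set sets_image_Icc null_sets_singleton)

lemma sets_image_Ico: "a \<le> u \<Longrightarrow> u \<le> v \<Longrightarrow> v \<le> b \<Longrightarrow> \<gamma> ` {u..<v} \<in> sets M"
  by (simp add: image_Ico sets.Diff sets_image_Icc null_setsD2[OF null_sets_singleton])

lemma emeasure_image_Icc_finite: "a \<le> u \<Longrightarrow> v \<le> b \<Longrightarrow> emeasure M (\<gamma> ` {u..v}) < \<infinity>"
  using emeasure_arc_finite order.strict_trans1[OF emeasure_mono]
  by (metis atLeastatMost_subset_iff image_mono order.refl sets_image_Icc)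

lemma emeasure_image_Ico_add:
  assumes "a \<le> u" "u \<le> v" "v \<le> w" "w \<le> b"
  shows "emeasure M (\<gamma> ` {u..<w}) = emeasure M (\<gamma> ` {u..<v}) + emeasure M (\<gamma> ` {v..<w})"
proof -
  have "\<gamma> ` {u..<v} \<inter> \<gamma> ` {v..<w} = \<gamma> ` ({u..<v} \<inter> {v..<w})"
    using assms by (intro inj_on_image_Int[OF inj_arc, symmetric]) auto
  then have "\<gamma> ` {u..<v} \<inter> \<gamma> ` {v..<w} = {}" by auto
  moreover have "{u..<w} = {u..<v} \<union> {v..<w}"
    using assms by auto
  ultimately show ?thesis
    using assms by (simp add: plus_emeasure sets_image_Ico image_Un)
qed

definition arc_measure :: "real \<Rightarrow> real" where
  "arc_measure t = enn2real (emeasure M (\<gamma> ` {a..<t}))"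

lemma emeasure_image_Ico_eq:
  assumes "a \<le> u" "u \<le> v" "v \<le> b"
  shows "emeasure M (\<gamma> ` {u..<v}) = ennreal (arc_measure v - arc_measure u)"
proof -
  have finite: "emeasure M (\<gamma> ` {x..<y}) < \<infinity>" if "a \<le> x" "x \<le> y" "y \<le> b" for x y
    using that by (metis emeasure_image_Ico emeasure_image_Icc_finite)
  have "emeasure M (\<gamma> ` {a..<v}) = emeasure M (\<gamma> ` {a..<u}) + emeasure M (\<gamma> ` {u..<v})"
    using assms by (intro emeasure_image_Ico_add) auto
  then show ?thesis
    using assms finite[of a u] finite[of a v] finite[of u v] unfolding arc_measure_def
    by (auto simp: enn2real_plus less_top[symmetric] ennreal_enn2real_if)
qed

lemma arc_measure_start: "arc_measure a = 0"
  by (simp add: arc_measure_def)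

lemma arc_measure_less:
  assumes "a \<le> u" "u < v" "v \<le> b"
  shows "arc_measure u < arc_measure v"
  using emeasure_subarc_pos[OF assms] assms
  by (simp add: emeasure_image_Ico_eq flip: emeasure_image_Ico)

lemma arc_measure_le: "a \<le> u \<Longrightarrow> u \<le> v \<Longrightarrow> v \<le> b \<Longrightarrow> arc_measure u \<le> arc_measure v"
  using arc_measure_less by (cases "u = v") (auto intro: less_imp_le)

lemma emeasure_image_cball_tendsto_0:
  assumes t: "t \<in> {a..b}"
  shows "(\<lambda>k. emeasure M (\<gamma> ` ({a..b} \<inter> cball t (inverse (Suc k))))) \<longlonglongrightarrow> 0"
proof -
  define A where "A k = \<gamma> ` ({a..b} \<inter> cball t (inverse (Suc k)))" for k
  have A_Icc: "A k = \<gamma> ` {max a (t - inverse (Suc k))..min b (t + inverse (Suc k))}" for k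
    by (simp add: A_def cball_eq_atLeastAtMost)
  have "range A \<subseteq> sets M"
    by (auto simp: A_Icc sets_image_Icc)
  moreover have "emeasure M (A k) \<noteq> \<infinity>" for k
    unfolding A_Icc by (intro less_imp_neq emeasure_image_Icc_finite max.cobounded1 min.cobounded1)
  moreover have "decseq A"
    unfolding A_def decseq_def
    by (intro allI impI image_mono Int_mono order.refl subset_cball le_imp_inverse_le) auto
  ultimately have "(\<lambda>k. emeasure M (A k)) \<longlonglongrightarrow> emeasure M (\<Inter>k. A k)"
    using Lim_emeasure_decseq by blast
  moreover have "(\<Inter>k. {a..b} \<inter> cball t (inverse (Suc k))) = {t}"
  proof safe
    fix s assume "s \<in> (\<Inter>k. {a..b} \<inter> cball t (inverse (Suc k)))"
    then have "dist t s \<le> inverse (Suc k)" for k by auto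
    then show "s = t"
      using reals_Archimedean by (metis not_le zero_less_dist_iff)
  qed (use t in auto)
  then have "(\<Inter>k. A k) = {\<gamma> t}"
    unfolding A_def by (subst image_INT[OF inj_arc, symmetric]) auto
  ultimately show ?thesis by (simp add: A_def emeasure_singleton)
qed

lemma continuous_on_arc_measure: "continuous_on {a..b} arc_measure"
  unfolding continuous_on_iff
proof (intro ballI allI impI)
  fix t \<epsilon> :: real assume t: "t \<in> {a..b}" and "0 < \<epsilon>"
  then have "eventually (\<lambda>k. emeasure M (\<gamma> ` ({a..b} \<inter> cball t (inverse (Suc k)))) < ennreal \<epsilon>)
      sequentially"
    using order_tendstoD(2)[OF emeasure_image_cball_tendsto_0[OF t], of "ennreal \<epsilon>"] by simp
  then obtain k where k: "emeasure M (\<gamma> ` ({a..b} \<inter> cball t (inverse (Suc k)))) < ennreal \<epsilon>"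
    by (auto simp: eventually_sequentially)
  show "\<exists>\<delta>>0. \<forall>s\<in>{a..b}. dist s t < \<delta> \<longrightarrow> dist (arc_measure s) (arc_measure t) < \<epsilon>"
  proof (intro exI[of _ "inverse (Suc k)"] conjI ballI impI)
    fix s assume s: "s \<in> {a..b}" and "dist s t < inverse (Suc k)"
    then have "\<gamma> ` {min s t..<max s t} \<subseteq> \<gamma> ` ({a..b} \<inter> cball t (inverse (Suc k)))"
      using t by (intro image_mono) (auto simp: dist_real_def)
    then have "emeasure M (\<gamma> ` {min s t..<max s t})
        \<le> emeasure M (\<gamma> ` ({a..b} \<inter> cball t (inverse (Suc k))))"
      by (rule emeasure_mono) (simp add: cball_eq_atLeastAtMost sets_image_Icc)
    then have "emeasure M (\<gamma> ` {min s t..<max s t}) < ennreal \<epsilon>"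
      using k by (rule le_less_trans)
    then have "arc_measure (max s t) - arc_measure (min s t) < \<epsilon>"
      using s t by (simp add: emeasure_image_Ico_eq arc_measure_le ennreal_less_iff)
    then show "dist (arc_measure s) (arc_measure t) < \<epsilon>"
      using s t arc_measure_le[of s t] arc_measure_le[of t s]
      by (cases "s \<le> t") (simp_all add: dist_real_def)
  qed simp
qed

lemma arc_measure_pos: "0 < arc_measure b"
  using arc_measure_less[of a b] a_less_b by (simp add: arc_measure_start)

lemma equipartition:
  fixes n :: nat
  defines "m \<equiv> arc_measure b / n"
  obtains t where "\<And>i. i \<le> n \<Longrightarrow> t i \<in> {a..b}" and "strict_mono_on {..n} t"
    and "\<And>i. i \<le> n \<Longrightarrow> arc_measure (t i) = real i * m"
    and "\<And>i j. i \<le> j \<Longrightarrow> j \<le> n \<Longrightarrow> emeasure M (\<gamma> ` {t i..<t j}) = ennreal ((real j - real i) * m)"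
proof -
  have "\<exists>s\<in>{a..b}. arc_measure s = real i * m" if "i \<le> n" for i
  proof -
    have "0 \<le> real i * m" "real i * m \<le> arc_measure b"
      by (cases "n = 0") (use that arc_measure_pos in \<open>auto simp: m_def divide_le_eq intro: mult_right_mono\<close>)
    then show ?thesis
      using IVT'[of arc_measure a "real i * m" b] a_less_b continuous_on_arc_measure
      by (auto simp: arc_measure_start)
  qed
  then obtain t where t_in: "\<And>i. i \<le> n \<Longrightarrow> t i \<in> {a..b}"
    and t_measure: "\<And>i. i \<le> n \<Longrightarrow> arc_measure (t i) = real i * m"
    by metis
  have t_less: "t i < t j" if "i < j" "j \<le> n" for i j
  proof (rule ccontr)
    assume "\<not> t i < t j"
    then have "real j * m \<le> real i * m"
      using arc_measure_le[of "t j" "t i"] t_in[of i] t_in[of j] t_measure[of i] t_measure[of j] that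
      by auto
    moreover have "0 < m" using that arc_measure_pos by (simp add: m_def)
    ultimately show False using that by simp
  qed
  show ?thesis
  proof (rule that[OF t_in _ t_measure])
    show "strict_mono_on {..n} t" by (intro strict_mono_onI t_less) auto
    show "emeasure M (\<gamma> ` {t i..<t j}) = ennreal ((real j - real i) * m)" if "i \<le> j" "j \<le> n" for i j
      using that t_in[of i] t_in[of j] t_less[of i j]
      by (cases "i = j") (simp_all add: emeasure_image_Ico_eq t_measure left_diff_distrib)
  qed
qed

lemma sum_set_nn_integral_image_Ico_le:
  fixes g :: "'a \<Rightarrow> ennreal"
  assumes g: "g \<in> borel_measurable M"
    and t: "\<And>i. i \<le> n \<Longrightarrow> t i \<in> {a..b}" "mono_on {..n} t"
  shows "(\<Sum>i<n. set_nn_integral M (\<gamma> ` {t i..<t (Suc i)}) g) \<le> set_nn_integral M (\<gamma> ` {a..b}) g"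
proof (rule sum_set_nn_integral_le_disjoint[OF finite_lessThan _ _ _ g])
  have "\<gamma> ` {t i..<t (Suc i)} \<inter> \<gamma> ` {t j..<t (Suc j)} = {}" if "i < j" "j < n" for i j
  proof -
    have "t (Suc i) \<le> t j" using that t(2) by (auto intro: mono_onD)
    then have "{t i..<t (Suc i)} \<inter> {t j..<t (Suc j)} = {}" by auto
    then show ?thesis
      using that t(1)[of i] t(1)[of "Suc i"] t(1)[of j] t(1)[of "Suc j"]
      by (subst inj_on_image_Int[OF inj_arc, symmetric]) auto
  qed
  then show "disjoint_family_on (\<lambda>i. \<gamma> ` {t i..<t (Suc i)}) {..<n}"
    unfolding disjoint_family_on_def by (metis Int_commute lessThan_iff nat_neq_iff)
  show "\<gamma> ` {t i..<t (Suc i)} \<in> sets M" if "i \<in> {..<n}" for i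
    using that t by (intro sets_image_Ico) (auto intro: mono_onD)
  show "\<gamma> ` {t i..<t (Suc i)} \<subseteq> \<gamma> ` {a..b}" if "i \<in> {..<n}" for i
    using that t(1)[of i] t(1)[of "Suc i"] by auto
qed

lemma continuous_near_start:
  fixes F :: "real \<Rightarrow> real"
  assumes F: "continuous_on {a..b} F" and "0 < e"
  obtains \<delta> where "0 < \<delta>" "\<And>s. s \<in> {a..b} \<Longrightarrow> arc_measure s < \<delta> \<Longrightarrow> \<bar>F s - F a\<bar> < e"
proof -
  obtain d where "0 < d" and d: "\<And>s. s \<in> {a..b} \<Longrightarrow> dist s a < d \<Longrightarrow> dist (F s) (F a) < e"
    using F \<open>0 < e\<close> a_less_b unfolding continuous_on_iff by (meson atLeastAtMost_iff less_imp_le order.refl)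
  let ?c = "min (a + d) b"
  show ?thesis
  proof
    show "0 < arc_measure ?c"
      using arc_measure_less[of a ?c] \<open>0 < d\<close> a_less_b by (simp add: arc_measure_start)
    show "\<bar>F s - F a\<bar> < e" if "s \<in> {a..b}" "arc_measure s < arc_measure ?c" for s
      using that arc_measure_le[of ?c s] \<open>0 < d\<close> a_less_b d[of s] by (force simp: dist_real_def)
  qed
qed

lemma continuous_near_end:
  fixes F :: "real \<Rightarrow> real"
  assumes F: "continuous_on {a..b} F" and "0 < e"
  obtains \<delta> where "0 < \<delta>"
    "\<And>s. s \<in> {a..b} \<Longrightarrow> arc_measure b - \<delta> < arc_measure s \<Longrightarrow> \<bar>F s - F b\<bar> < e"
proof -
  obtain d where "0 < d" and d: "\<And>s. s \<in> {a..b} \<Longrightarrow> dist s b < d \<Longrightarrow> dist (F s) (F b) < e"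
    using F \<open>0 < e\<close> a_less_b unfolding continuous_on_iff by (meson atLeastAtMost_iff less_imp_le order.refl)
  let ?c = "max (b - d) a"
  show ?thesis
  proof
    show "0 < arc_measure b - arc_measure ?c"
      using arc_measure_less[of ?c b] \<open>0 < d\<close> a_less_b by simp
    show "\<bar>F s - F b\<bar> < e"
      if "s \<in> {a..b}" "arc_measure b - (arc_measure b - arc_measure ?c) < arc_measure s" for s
      using that arc_measure_le[of s ?c] \<open>0 < d\<close> a_less_b d[of s] by (force simp: dist_real_def)
  qed
qed

lemma adjacent_points_estimate:
  fixes F :: "real \<Rightarrow> real" and g :: "'a \<Rightarrow> ennreal"
  assumes C: "0 < C" and m: "0 < m"
    and pair: "ennreal \<bar>F u - F v\<bar> \<le> ennreal C * emeasure M (\<gamma> ` {u..v}) * (g (\<gamma> u) + g (\<gamma> v))"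
    and subarc: "emeasure M (\<gamma> ` {u..v}) \<le> ennreal (2 * m)"
    and average: "g (\<gamma> u) * ennreal m \<le> J" "g (\<gamma> v) * ennreal m \<le> J'"
  shows "ennreal \<bar>F u - F v\<bar> \<le> ennreal (2 * C) * (J + J')"
proof -
  have "ennreal \<bar>F u - F v\<bar> \<le> ennreal C * ennreal (2 * m) * (g (\<gamma> u) + g (\<gamma> v))"
    using pair by (rule order_trans) (intro mult_right_mono mult_left_mono subarc; simp)
  also have "ennreal C * ennreal (2 * m) = ennreal (2 * C) * ennreal m"
    using C m by (simp flip: ennreal_mult add: mult_ac)
  also have "ennreal (2 * C) * ennreal m * (g (\<gamma> u) + g (\<gamma> v))
      = ennreal (2 * C) * (g (\<gamma> u) * ennreal m + g (\<gamma> v) * ennreal m)"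
    by (simp add: distrib_left distrib_right mult_ac)
  also have "\<dots> \<le> ennreal (2 * C) * (J + J')"
    by (intro mult_left_mono add_mono average) auto
  finally show ?thesis .
qed

lemma exists_average_point:
  fixes g :: "'a \<Rightarrow> ennreal"
  assumes g: "g \<in> borel_measurable M" and "a \<le> u" "u < v" "v \<le> b"
  shows "\<exists>x\<in>{u..<v}. g (\<gamma> x) * emeasure M (\<gamma> ` {u..<v}) \<le> set_nn_integral M (\<gamma> ` {u..<v}) g"
proof -
  have "0 < emeasure M (\<gamma> ` {u..<v})" "emeasure M (\<gamma> ` {u..<v}) < \<infinity>"
    using assms emeasure_subarc_pos[of u v] emeasure_image_Icc_finite[of u v]
    by (simp_all add: emeasure_image_Ico)
  then show ?thesis
    using exists_mult_emeasure_le_set_nn_integral[OF sets_image_Ico _ _ g] assms by fastforce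
qed

lemma average_points:
  fixes n :: nat and g :: "'a \<Rightarrow> ennreal"
  assumes g: "g \<in> borel_measurable M"
  defines "m \<equiv> arc_measure b / Suc n"
  obtains s J where "\<And>i. i \<le> n \<Longrightarrow> s i \<in> {a..b}"
    and "arc_measure (s 0) \<le> m" and "real n * m \<le> arc_measure (s n)"
    and "\<And>i. i < n \<Longrightarrow> s i < s (Suc i)"
    and "\<And>i. i < n \<Longrightarrow> emeasure M (\<gamma> ` {s i..s (Suc i)}) \<le> ennreal (2 * m)"
    and "\<And>i. i \<le> n \<Longrightarrow> g (\<gamma> (s i)) * ennreal m \<le> J i"
    and "(\<Sum>i<Suc n. J i) \<le> set_nn_integral M (\<gamma> ` {a..b}) g"
proof -
  obtain t where t_in: "\<And>i. i \<le> Suc n \<Longrightarrow> t i \<in> {a..b}" and t_strict: "strict_mono_on {..Suc n} t"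
    and t_measure: "\<And>i. i \<le> Suc n \<Longrightarrow> arc_measure (t i) = real i * m"
    and pieces: "\<And>i j. i \<le> j \<Longrightarrow> j \<le> Suc n \<Longrightarrow> emeasure M (\<gamma> ` {t i..<t j}) = ennreal ((real j - real i) * m)"
    using equipartition[of "Suc n"] unfolding m_def by blast
  have t_le: "t i \<le> t j" if "i \<le> j" "j \<le> Suc n" for i j
    using strict_mono_on_imp_mono_on[OF t_strict] that by (auto intro: mono_onD)
  define J where "J i = set_nn_integral M (\<gamma> ` {t i..<t (Suc i)}) g" for i
  have "\<exists>x\<in>{t i..<t (Suc i)}. g (\<gamma> x) * ennreal m \<le> J i" if "i \<le> n" for i
    using exists_average_point[OF g, of "t i" "t (Suc i)"] strict_mono_onD[OF t_strict, of i "Suc i"]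
      that t_in[of i] t_in[of "Suc i"] pieces[of i "Suc i"]
    by (simp add: J_def)
  then obtain s where s_in: "\<And>i. i \<le> n \<Longrightarrow> s i \<in> {t i..<t (Suc i)}"
    and s_average: "\<And>i. i \<le> n \<Longrightarrow> g (\<gamma> (s i)) * ennreal m \<le> J i"
    by metis
  have s_in_ab: "s i \<in> {a..b}" if "i \<le> n" for i
    using that s_in[of i] t_in[of i] t_in[of "Suc i"] by auto
  show ?thesis
  proof (rule that[OF s_in_ab _ _ _ _ s_average])
    show "arc_measure (s 0) \<le> m"
      using arc_measure_le[of "s 0" "t 1"] s_in_ab[of 0] s_in[of 0] t_in[of 1] t_measure[of 1] by simp
    show "real n * m \<le> arc_measure (s n)"
      using arc_measure_le[of "t n" "s n"] s_in[of n] t_in[of n] s_in_ab[of n] t_measure[of n] by simp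
    show "s i < s (Suc i)" if "i < n" for i
      using that s_in[of i] s_in[of "Suc i"] by auto
    show "emeasure M (\<gamma> ` {s i..s (Suc i)}) \<le> ennreal (2 * m)" if "i < n" for i
    proof -
      have "emeasure M (\<gamma> ` {s i..s (Suc i)}) \<le> emeasure M (\<gamma> ` {t i..<t (Suc (Suc i))})"
        using that s_in[of i] s_in[of "Suc i"] t_in[of i] t_in[of "Suc (Suc i)"] t_le[of i "Suc (Suc i)"]
        by (intro emeasure_mono image_mono sets_image_Ico) auto
      then show ?thesis using that by (simp add: pieces)
    qed
    show "(\<Sum>i<Suc n. J i) \<le> set_nn_integral M (\<gamma> ` {a..b}) g"
      unfolding J_def using t_in strict_mono_on_imp_mono_on[OF t_strict]
      by (intro sum_set_nn_integral_image_Ico_le[OF g]) auto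
  qed
qed

lemma discrete_endpoint_estimate:
  fixes F :: "real \<Rightarrow> real" and g :: "'a \<Rightarrow> ennreal"
  assumes g: "g \<in> borel_measurable M" and C: "0 < C"
    and pair: "\<And>u v. a \<le> u \<Longrightarrow> u < v \<Longrightarrow> v \<le> b \<Longrightarrow>
      ennreal \<bar>F u - F v\<bar> \<le> ennreal C * emeasure M (\<gamma> ` {u..v}) * (g (\<gamma> u) + g (\<gamma> v))"
  obtains s0 s1 where "s0 \<in> {a..b}" "s1 \<in> {a..b}"
    and "arc_measure s0 \<le> arc_measure b / Suc n"
    and "arc_measure b - arc_measure b / Suc n \<le> arc_measure s1"
    and "ennreal \<bar>F s0 - F s1\<bar> \<le> ennreal (4 * C) * set_nn_integral M (\<gamma> ` {a..b}) g"
proof -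
  define m where "m = arc_measure b / Suc n"
  obtain s J where s_in: "\<And>i. i \<le> n \<Longrightarrow> s i \<in> {a..b}"
    and start: "arc_measure (s 0) \<le> m" and final: "real n * m \<le> arc_measure (s n)"
    and s_less: "\<And>i. i < n \<Longrightarrow> s i < s (Suc i)"
    and subarc: "\<And>i. i < n \<Longrightarrow> emeasure M (\<gamma> ` {s i..s (Suc i)}) \<le> ennreal (2 * m)"
    and average: "\<And>i. i \<le> n \<Longrightarrow> g (\<gamma> (s i)) * ennreal m \<le> J i"
    and total: "(\<Sum>i<Suc n. J i) \<le> set_nn_integral M (\<gamma> ` {a..b}) g"
    using average_points[OF g] unfolding m_def by blast
  have "ennreal \<bar>F (s i) - F (s (Suc i))\<bar> \<le> ennreal (2 * C) * (J i + J (Suc i))" if "i < n" for i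
    using that s_in[of i] s_in[of "Suc i"] s_less[of i] subarc[of i] arc_measure_pos
    by (intro adjacent_points_estimate[where F=F and g=g and m=m, OF C] pair average) (auto simp: m_def)
  then have "ennreal \<bar>F (s 0) - F (s n)\<bar> \<le> ennreal (2 * C) * (2 * (\<Sum>i<Suc n. J i))"
    by (rule telescoping_adjacent_estimate)
  also have "\<dots> \<le> ennreal (2 * C) * (2 * set_nn_integral M (\<gamma> ` {a..b}) g)"
    using total by (intro mult_left_mono) auto
  also have "\<dots> = ennreal (4 * C) * set_nn_integral M (\<gamma> ` {a..b}) g"
    using C by (simp add: ennreal_mult mult_ac)
  finally have estimate: "ennreal \<bar>F (s 0) - F (s n)\<bar> \<le> ennreal (4 * C) * set_nn_integral M (\<gamma> ` {a..b}) g" .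
  have "arc_measure b - arc_measure b / Suc n \<le> arc_measure (s n)"
    using final by (simp add: m_def field_simps)
  then show ?thesis
    using that[OF s_in[OF le0] s_in[OF order.refl] _ _ estimate] start by (simp add: m_def)
qed

lemma endpoint_estimate:
  fixes F :: "real \<Rightarrow> real" and g :: "'a \<Rightarrow> ennreal"
  assumes g: "g \<in> borel_measurable M" and C: "0 < C" and F: "continuous_on {a..b} F"
    and pair: "\<And>u v. a \<le> u \<Longrightarrow> u < v \<Longrightarrow> v \<le> b \<Longrightarrow>
      ennreal \<bar>F u - F v\<bar> \<le> ennreal C * emeasure M (\<gamma> ` {u..v}) * (g (\<gamma> u) + g (\<gamma> v))"
  shows "ennreal \<bar>F a - F b\<bar> \<le> ennreal (4 * C) * set_nn_integral M (\<gamma> ` {a..b}) g"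
proof (cases "set_nn_integral M (\<gamma> ` {a..b}) g = \<infinity>")
  case True
  then show ?thesis using C by (simp add: ennreal_mult_top)
next
  case False
  define R where "R = enn2real (ennreal (4 * C) * set_nn_integral M (\<gamma> ` {a..b}) g)"
  have R: "ennreal R = ennreal (4 * C) * set_nn_integral M (\<gamma> ` {a..b}) g"
    using False by (simp add: R_def ennreal_mult_less_top less_top)
  have "0 \<le> R" by (simp add: R_def)
  have "\<bar>F a - F b\<bar> \<le> R + e" if "0 < e" for e
  proof -
    obtain \<delta>a where "0 < \<delta>a"
      and near_a: "\<And>s. s \<in> {a..b} \<Longrightarrow> arc_measure s < \<delta>a \<Longrightarrow> \<bar>F s - F a\<bar> < e / 2"
      using continuous_near_start[OF F, of "e / 2"] \<open>0 < e\<close> by auto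
    obtain \<delta>b where "0 < \<delta>b"
      and near_b: "\<And>s. s \<in> {a..b} \<Longrightarrow> arc_measure b - \<delta>b < arc_measure s \<Longrightarrow> \<bar>F s - F b\<bar> < e / 2"
      using continuous_near_end[OF F, of "e / 2"] \<open>0 < e\<close> by auto
    obtain n where "inverse (Suc n) < min \<delta>a \<delta>b / arc_measure b"
      using reals_Archimedean \<open>0 < \<delta>a\<close> \<open>0 < \<delta>b\<close> arc_measure_pos by (metis divide_pos_pos min_less_iff_conj)
    then have n: "arc_measure b / Suc n < \<delta>a" "arc_measure b / Suc n < \<delta>b"
      using arc_measure_pos by (auto simp: field_simps)
    obtain s0 s1 where "s0 \<in> {a..b}" "s1 \<in> {a..b}"
      and "arc_measure s0 \<le> arc_measure b / Suc n" "arc_measure b - arc_measure b / Suc n \<le> arc_measure s1"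
      and estimate: "ennreal \<bar>F s0 - F s1\<bar> \<le> ennreal (4 * C) * set_nn_integral M (\<gamma> ` {a..b}) g"
      using discrete_endpoint_estimate[OF g C pair] by blast
    then have "\<bar>F s0 - F a\<bar> < e / 2" "\<bar>F s1 - F b\<bar> < e / 2"
      using near_a[of s0] near_b[of s1] n by auto
    moreover have "\<bar>F s0 - F s1\<bar> \<le> R"
      using estimate \<open>0 \<le> R\<close> by (simp flip: R)
    ultimately show ?thesis by linarith
  qed
  then have "\<bar>F a - F b\<bar> \<le> R" by (rule field_le_epsilon)
  then show ?thesis by (simp flip: R add: ennreal_leI)
qed

end

lemma measured_arc_if_Gamma_mu:
  assumes "(a, b, \<gamma>) \<in> Gamma_mu M" "sets M = sets borel" "\<And>x. emeasure M {x} = 0"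
  shows "measured_arc M a b \<gamma>"
  using assms unfolding Gamma_mu_def by unfold_locales (auto simp: order.strict_implies_order)

lemma arc_chord_holder_estimate:
  fixes M :: "'a::metric_space measure" and g :: "'a \<Rightarrow> ennreal" and f :: "'a \<Rightarrow> real"
  assumes "0 \<le> \<beta>" and closed: "closed_under_subpaths \<Gamma>"
    and arc_chord: "\<forall>p\<in>\<Gamma>. ennreal (diameter (path_img p) powr \<beta>) \<le> ennreal C * emeasure M (path_img p)"
    and holder: "\<And>x y. ennreal \<bar>f x - f y\<bar> \<le> ennreal (dist x y powr \<beta>) * (g x + g y)"
    and path: "(a, b, \<gamma>) \<in> \<Gamma>" "continuous_on {a..b} \<gamma>"
    and uv: "a \<le> u" "u < v" "v \<le> b"
  shows "ennreal \<bar>f (\<gamma> u) - f (\<gamma> v)\<bar> \<le> ennreal C * emeasure M (\<gamma> ` {u..v}) * (g (\<gamma> u) + g (\<gamma> v))"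
proof -
  have "bounded (\<gamma> ` {u..v})"
    using uv by (intro compact_imp_bounded compact_continuous_image continuous_on_subset[OF path(2)]) auto
  then have "dist (\<gamma> u) (\<gamma> v) \<le> diameter (\<gamma> ` {u..v})"
    using uv by (intro diameter_bounded_bound) auto
  then have "dist (\<gamma> u) (\<gamma> v) powr \<beta> \<le> diameter (\<gamma> ` {u..v}) powr \<beta>"
    using \<open>0 \<le> \<beta>\<close> by (intro powr_mono2) auto
  moreover have "ennreal (diameter (\<gamma> ` {u..v}) powr \<beta>) \<le> ennreal C * emeasure M (\<gamma> ` {u..v})"
    using arc_chord closed path(1) uv unfolding closed_under_subpaths_def
    by (force simp: path_img_def)
  ultimately have "ennreal (dist (\<gamma> u) (\<gamma> v) powr \<beta>) \<le> ennreal C * emeasure M (\<gamma> ` {u..v})"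
    by (meson ennreal_leI order_trans)
  then show ?thesis
    using holder[of "\<gamma> u" "\<gamma> v"] by (auto elim!: order_trans intro: mult_right_mono)
qed

lemma endpoint_difference_le_path_int:
  fixes M :: "'a::metric_space measure" and f :: "'a \<Rightarrow> real" and g :: "'a \<Rightarrow> ennreal"
  assumes borel: "sets M = sets borel" and nonatomic: "\<And>x. emeasure M {x} = 0"
    and "0 \<le> \<beta>" and sub: "\<Gamma> \<subseteq> Gamma_mu M" and closed: "closed_under_subpaths \<Gamma>"
    and C: "0 < C" "\<forall>p\<in>\<Gamma>. ennreal (diameter (path_img p) powr \<beta>) \<le> ennreal C * emeasure M (path_img p)"
    and fcont: "continuous_on UNIV f" and gmeas: "g \<in> borel_measurable M"
    and holder: "\<And>x y. ennreal \<bar>f x - f y\<bar> \<le> ennreal (dist x y powr \<beta>) * (g x + g y)"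
    and p: "(a, b, \<gamma>) \<in> \<Gamma>"
  shows "ennreal \<bar>f (\<gamma> a) - f (\<gamma> b)\<bar> \<le> path_int M (a, b, \<gamma>) (\<lambda>x. ennreal (4 * C) * g x)"
proof -
  interpret measured_arc M a b \<gamma>
    using p sub borel nonatomic by (intro measured_arc_if_Gamma_mu) auto
  have "ennreal \<bar>f (\<gamma> a) - f (\<gamma> b)\<bar> \<le> ennreal (4 * C) * set_nn_integral M (\<gamma> ` {a..b}) g"
    using C gmeas \<open>0 \<le> \<beta>\<close> arc_chord_holder_estimate[OF \<open>0 \<le> \<beta>\<close> closed C(2) holder p continuous_arc]
    by (intro endpoint_estimate continuous_on_compose2[OF fcont continuous_arc]) auto
  also have "\<dots> = path_int M (a, b, \<gamma>) (\<lambda>x. ennreal (4 * C) * g x)"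
    using gmeas sets_image_Icc[of a b]
    by (simp add: path_int_def path_img_def nn_integral_cmult mult.assoc)
  finally show ?thesis .
qed

theorem lemma5p5:
  fixes M :: "'a::metric_space measure" and \<beta> :: real
    and \<Gamma> :: "'a rpath set" and f :: "'a \<Rightarrow> real" and g :: "'a \<Rightarrow> ennreal"
  assumes borel: "sets M = sets borel"
    and nonatomic: "\<And>x. emeasure M {x} = 0"
    and beta: "\<beta> > 0"
    and sub: "\<Gamma> \<subseteq> Gamma_mu M"
    and closed: "closed_under_subpaths \<Gamma>"
    and ac: "arc_chord M \<beta> \<Gamma>"
    and fcont: "continuous_on UNIV f"
    and gmeas: "g \<in> borel_measurable M"
    and hyp: "\<And>x y. ennreal \<bar>f x - f y\<bar> \<le> ennreal (dist x y powr \<beta>) * (g x + g y)"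
  shows "\<exists>C>0. upper_gradient M \<Gamma> f (\<lambda>x. ennreal C * g x)"
proof -
  obtain C where "0 < C"
    and C: "\<forall>p\<in>\<Gamma>. ennreal (diameter (path_img p) powr \<beta>) \<le> ennreal C * emeasure M (path_img p)"
    using ac unfolding arc_chord_def by blast
  have "upper_gradient M \<Gamma> f (\<lambda>x. ennreal (4 * C) * g x)"
    unfolding upper_gradient_def path_start_def path_end_def
    using endpoint_difference_le_path_int[OF borel nonatomic _ sub closed \<open>0 < C\<close> C fcont gmeas hyp] beta
    by auto
  then show ?thesis using \<open>0 < C\<close> by (intro exI[of _ "4 * C"]) simp
qed

end
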